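(* Let $N$ be a finite set, $C \subseteq 2^{N}$ a family of subsets of $N$, and let $(x^*,y^* )$ be a vertex of the polytope $\bar{P}(C) = \{ (x,y) \in [0,1]^{|N|+1} : \sum_{j \in S} x_j \ge y \ \forall S \in C\}$. Then $y^* \in \{0,1\}$.
   Context: Here $x = (x_j)_{j\in N}$ and $y$ is a scalar variable. *)

theory Defs
  imports "HOL-Analysis.Analysis"
begin

text \<open>The ground set N is the finite index type 'n; points of R^{|N|+1} are pairs (x,y)
  with x :: real^'n and y :: real.\<close>

definition Pbar :: "'n::finite set set \<Rightarrow> ((real^'n) \<times> real) set" where
  "Pbar C = {(x, y). (\<forall>j. 0 \<le> x $ j \<and> x $ j \<le> 1) \<and> 0 \<le> y \<and> y \<le> 1 \<and>
                     (\<forall>S\<in>C. (\<Sum>j\<in>S. x $ j) \<ge> y)}"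

end

theory Submission
  imports Defs
begin

text \<open>If \<open>0 < y < 1\<close>, split every coordinate as
  \<open>x\<^sub>j = max (x\<^sub>j - y) 0 + min y x\<^sub>j\<close>. Rescaling the first part by \<open>1/(1-y)\<close> gives a point of
  \<open>Pbar C\<close> on the level \<open>y = 0\<close>, where the covering constraints are void; rescaling the second
  part by \<open>1/y\<close> gives a point on the level \<open>y = 1\<close>, since a set \<open>S \<in> C\<close> either contains some
  \<open>j\<close> with \<open>x\<^sub>j \<ge> y\<close>, whose new coordinate is \<open>1\<close>, or has all its coordinates scaled by \<open>1/y\<close>.
  Hence \<open>(x, y)\<close> lies in the open segment between these two points and is not extreme.\<close>

definition lower_point :: "real \<Rightarrow> real^'n \<Rightarrow> real^'n" where
  "lower_point t x = (\<chi> j. max (x $ j - t) 0 / (1 - t))"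

definition upper_point :: "real \<Rightarrow> real^'n \<Rightarrow> real^'n" where
  "upper_point t x = (\<chi> j. min 1 (x $ j / t))"

lemma Pbar_level_zero_iff:
  "(x, 0) \<in> Pbar C \<longleftrightarrow> (\<forall>j. 0 \<le> x $ j \<and> x $ j \<le> 1)"
  by (auto simp: Pbar_def intro: sum_nonneg)

lemma lower_point_mem_Pbar:
  assumes "(x, t) \<in> Pbar C" and "t < 1"
  shows "(lower_point t x, 0) \<in> Pbar C"
  unfolding Pbar_level_zero_iff
proof
  fix j
  have "max (x $ j - t) 0 \<le> 1 - t"
    using assms by (auto simp: Pbar_def)
  then show "0 \<le> lower_point t x $ j \<and> lower_point t x $ j \<le> 1"
    using \<open>t < 1\<close> by (simp add: lower_point_def field_simps)
qed

lemma upper_point_mem_Pbar: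
  assumes mem: "(x, t) \<in> Pbar C" and "0 < t"
  shows "(upper_point t x, 1) \<in> Pbar C"
proof -
  have box: "0 \<le> upper_point t x $ j \<and> upper_point t x $ j \<le> 1" for j
    using mem \<open>0 < t\<close> by (simp add: Pbar_def upper_point_def)
  have "(\<Sum>j\<in>S. upper_point t x $ j) \<ge> 1" if "S \<in> C" for S
  proof (cases "\<exists>j\<in>S. x $ j \<ge> t")
    case True
    then obtain j where "j \<in> S" and "x $ j \<ge> t" by blast
    then have "upper_point t x $ j = 1"
      using \<open>0 < t\<close> by (simp add: upper_point_def)
    moreover have "upper_point t x $ j \<le> (\<Sum>j\<in>S. upper_point t x $ j)"
      using \<open>j \<in> S\<close> box by (intro member_le_sum) auto
    ultimately show ?thesis by simp
  next
    case False
    then have "upper_point t x $ j = x $ j / t" if "j \<in> S" for j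
      using that \<open>0 < t\<close> by (auto simp: upper_point_def)
    then have "(\<Sum>j\<in>S. upper_point t x $ j) = (\<Sum>j\<in>S. x $ j) / t"
      by (simp add: sum_divide_distrib)
    moreover have "(\<Sum>j\<in>S. x $ j) \<ge> t"
      using mem \<open>S \<in> C\<close> by (simp add: Pbar_def)
    ultimately show ?thesis
      using \<open>0 < t\<close> by simp
  qed
  then show ?thesis
    using box by (simp add: Pbar_def)
qed

lemma convex_combination_lower_upper_point:
  assumes "0 < t" and "t < 1"
  shows "x = (1 - t) *\<^sub>R lower_point t x + t *\<^sub>R upper_point t x"
  unfolding vec_eq_iff
proof
  fix j
  have "(1 - t) * (max (x $ j - t) 0 / (1 - t)) = max (x $ j - t) 0"
    using \<open>t < 1\<close> by simp
  moreover have "t * min 1 (x $ j / t) = min t (x $ j)"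
    using \<open>0 < t\<close> by (simp add: min_def field_simps)
  ultimately show "x $ j = ((1 - t) *\<^sub>R lower_point t x + t *\<^sub>R upper_point t x) $ j"
    by (auto simp: lower_point_def upper_point_def max_def min_def)
qed

lemma mem_open_segment_lower_upper_point:
  assumes "0 < t" and "t < 1"
  shows "(x, t) \<in> open_segment (lower_point t x, 0) (upper_point t x, 1)"
proof -
  have "(x, t) = (1 - t) *\<^sub>R (lower_point t x, 0) + t *\<^sub>R (upper_point t x, 1)"
    using convex_combination_lower_upper_point[OF assms] by simp
  then show ?thesis
    unfolding in_segment using assms by auto
qed

theorem lemma2:
  fixes C :: "'n::finite set set" and xs :: "real^'n" and ys :: real
  assumes "(xs, ys) extreme_point_of Pbar C"
  shows "ys \<in> {0, 1}"
proof (rule ccontr)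
  assume "ys \<notin> {0, 1}"
  have mem: "(xs, ys) \<in> Pbar C"
    using assms by (simp add: extreme_point_of_def)
  with \<open>ys \<notin> {0, 1}\<close> have "0 < ys" and "ys < 1"
    by (auto simp: Pbar_def)
  then have "(xs, ys) \<in> open_segment (lower_point ys xs, 0) (upper_point ys xs, 1)"
    by (rule mem_open_segment_lower_upper_point)
  moreover have "(lower_point ys xs, 0) \<in> Pbar C" and "(upper_point ys xs, 1) \<in> Pbar C"
    using mem \<open>0 < ys\<close> \<open>ys < 1\<close> by (simp_all add: lower_point_mem_Pbar upper_point_mem_Pbar)
  ultimately show False
    using assms by (auto simp: extreme_point_of_def)
qed

end
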